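(* Let $n$ be a positive integer and let $\mathcal{B}$ be a balanced bipartite graph on $2n$ vertices with parts $V_1$ and $V_2$ such that $\delta(\mathcal{B})\geq\frac{n}{2}+1$. If $S\subseteq V(\mathcal{B})$ satisfies $|S|=n+1$ and $\mathcal{B}[S]$ is a forest, then $\min\{|S\cap V_1|,|S\cap V_2|\}\in\{1,2,\frac{n}{2}\}$.
   Context: All graphs are finite and simple. A balanced bipartite graph on $2n$ vertices is a bipartite graph with a given bipartition $(V_1,V_2)$ where $|V_1|=|V_2|=n$. $\delta(G)$ denotes the minimum degree of $G$, and $G[S]$ the subgraph induced by $S\subseteq V(G)$. *)

theory Defs
  imports Complex_Main
begin

text \<open>A simple graph is given by a finite vertex set V and a symmetric irreflexive
  adjacency relation E (only its restriction to V matters).\<close>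

definition simple_graph :: "'a set \<Rightarrow> ('a \<Rightarrow> 'a \<Rightarrow> bool) \<Rightarrow> bool" where
  "simple_graph V E \<longleftrightarrow> finite V \<and> (\<forall>x y. E x y \<longrightarrow> E y x) \<and> (\<forall>x. \<not> E x x)"

definition balanced_bipartite :: "'a set \<Rightarrow> 'a set \<Rightarrow> ('a \<Rightarrow> 'a \<Rightarrow> bool) \<Rightarrow> nat \<Rightarrow> bool" where
  "balanced_bipartite V1 V2 E n \<longleftrightarrow>
     simple_graph (V1 \<union> V2) E \<and> V1 \<inter> V2 = {} \<and> card V1 = n \<and> card V2 = n \<and>
     (\<forall>x\<in>V1 \<union> V2. \<forall>y\<in>V1 \<union> V2. E x y \<longrightarrow> (x \<in> V1 \<and> y \<in> V2) \<or> (x \<in> V2 \<and> y \<in> V1))"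

definition degree :: "'a set \<Rightarrow> ('a \<Rightarrow> 'a \<Rightarrow> bool) \<Rightarrow> 'a \<Rightarrow> nat" where
  "degree V E v = card {u \<in> V. E v u}"

definition min_degree :: "'a set \<Rightarrow> ('a \<Rightarrow> 'a \<Rightarrow> bool) \<Rightarrow> nat" where
  "min_degree V E = Min (degree V E ` V)"

definition is_cycle :: "'a set \<Rightarrow> ('a \<Rightarrow> 'a \<Rightarrow> bool) \<Rightarrow> 'a list \<Rightarrow> bool" where
  "is_cycle V E cs \<longleftrightarrow> length cs \<ge> 3 \<and> distinct cs \<and> set cs \<subseteq> V \<and>
     (\<forall>i < length cs - 1. E (cs ! i) (cs ! (i + 1))) \<and> E (last cs) (hd cs)"

text \<open>The induced subgraph G[S] is a forest: it has no cycle. (Cycles of G[S] are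
  exactly cycles of G all of whose vertices lie in S.)\<close>
definition induced_forest :: "'a set \<Rightarrow> ('a \<Rightarrow> 'a \<Rightarrow> bool) \<Rightarrow> 'a set \<Rightarrow> bool" where
  "induced_forest V E S \<longleftrightarrow> S \<subseteq> V \<and> \<not> (\<exists>cs. is_cycle S E cs)"

end

theory Submission
  imports Defs
begin

text \<open>
  Let \<open>a \<le> b\<close> be the sizes of \<open>S \<inter> V\<^sub>1\<close> and \<open>S \<inter> V\<^sub>2\<close>, so \<open>a + b = n + 1\<close>.
  A vertex of \<open>S \<inter> V\<^sub>1\<close> has at most \<open>n - b\<close> neighbours in \<open>V\<^sub>2 - S\<close>, hence at least
  \<open>\<delta> + b - n \<ge> n/2 + 2 - a\<close> neighbours inside \<open>S\<close>. Every edge of the forest \<open>\<B>[S]\<close>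
  has exactly one end in \<open>V\<^sub>1\<close> and there are at most \<open>n\<close> of them, so
  \<open>a (n/2 + 2 - a) \<le> n\<close>, i.e. \<open>(a - 2)(n - 2a) \<le> 0\<close>. Together with \<open>2a \<le> n + 1\<close>
  this leaves \<open>a \<le> 2\<close>, \<open>2a = n\<close>, or \<open>2a = n + 1\<close>. In the last case \<open>2\<delta> \<ge> n + 2\<close>
  forces \<open>\<delta> + b - n \<ge> 2\<close>, so \<open>2a \<le> n\<close>, a contradiction.
\<close>

definition adj_pairs :: "'a set \<Rightarrow> ('a \<Rightarrow> 'a \<Rightarrow> bool) \<Rightarrow> ('a \<times> 'a) set" where
  "adj_pairs T E = {(x, y). x \<in> T \<and> y \<in> T \<and> E x y}"

definition is_path :: "'a set \<Rightarrow> ('a \<Rightarrow> 'a \<Rightarrow> bool) \<Rightarrow> 'a list \<Rightarrow> bool" where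
  "is_path T E p \<longleftrightarrow> p \<noteq> [] \<and> distinct p \<and> set p \<subseteq> T \<and>
     (\<forall>i < length p - 1. E (p ! i) (p ! Suc i))"

lemma finite_adj_pairs: "finite T \<Longrightarrow> finite (adj_pairs T E)"
  unfolding adj_pairs_def by (rule finite_subset[of _ "T \<times> T"]) auto

lemma is_cycle_mono: "is_cycle T' E cs \<Longrightarrow> T' \<subseteq> T \<Longrightarrow> is_cycle T E cs"
  unfolding is_cycle_def by blast

lemma is_cycle_take_path:
  assumes sym: "\<forall>x y. E x y \<longrightarrow> E y x" and p: "is_path T E p"
    and j: "2 \<le> j" "j < length p" and closing: "E (hd p) (p ! j)"
  shows "is_cycle T E (take (Suc j) p)"
proof -
  have "last (take (Suc j) p) = p ! j" using j by (subst last_conv_nth) auto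
  moreover have "hd (take (Suc j) p) = hd p" using j by (cases p) auto
  moreover have "set (take (Suc j) p) \<subseteq> T"
    using p set_take_subset unfolding is_path_def by fast
  ultimately show ?thesis
    using p j closing sym unfolding is_cycle_def is_path_def by auto
qed

lemma is_path_extend_or_cycle:
  assumes sym: "\<forall>x y. E x y \<longrightarrow> E y x" and irr: "\<forall>x. \<not> E x x"
    and p: "is_path T E p" and deg: "2 \<le> card {u \<in> T. E (hd p) u}"
  obtains u where "is_path T E (u # p)" | cs where "is_cycle T E cs"
proof (cases "\<exists>u \<in> T. E (hd p) u \<and> u \<notin> set p")
  case True
  then obtain u where u: "u \<in> T" "E (hd p) u" "u \<notin> set p" by blast
  have "is_path T E (u # p)"
    unfolding is_path_def
  proof (intro conjI allI impI)
    fix i assume i: "i < length (u # p) - 1"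
    show "E ((u # p) ! i) ((u # p) ! Suc i)"
    proof (cases i)
      case 0
      then show ?thesis using u p sym by (auto simp: is_path_def hd_conv_nth)
    next
      case (Suc i')
      then show ?thesis using p i by (auto simp: is_path_def)
    qed
  qed (use u p in \<open>auto simp: is_path_def\<close>)
  then show ?thesis by (rule that(1))
next
  case False
  have "\<not> {u \<in> T. E (hd p) u} \<subseteq> {p ! 1}"
    using deg card_mono[of "{p ! 1}" "{u \<in> T. E (hd p) u}"] by auto
  then obtain u where u: "u \<in> T" "E (hd p) u" "u \<noteq> p ! 1" by auto
  with False obtain j where j: "j < length p" "p ! j = u" by (metis in_set_conv_nth)
  have "j \<noteq> 0"
  proof
    assume "j = 0"
    then show False using u(2) j irr p by (auto simp: is_path_def hd_conv_nth)
  qed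
  moreover have "j \<noteq> 1" using u(3) j(2) by auto
  ultimately have "2 \<le> j" by linarith
  then have "is_cycle T E (take (Suc j) p)"
    using is_cycle_take_path[OF sym p _ j(1)] u j by simp
  then show ?thesis by (rule that(2))
qed

text \<open>Otherwise paths could be extended forever, beyond \<open>card T\<close> vertices.\<close>

lemma acyclic_has_vertex_of_degree_le_1:
  assumes fin: "finite T" and ne: "T \<noteq> {}"
    and sym: "\<forall>x y. E x y \<longrightarrow> E y x" and irr: "\<forall>x. \<not> E x x"
    and acyclic: "\<not> (\<exists>cs. is_cycle T E cs)"
  shows "\<exists>v \<in> T. card {u \<in> T. E v u} \<le> 1"
proof (rule ccontr)
  assume no_leaf: "\<not> ?thesis"
  have deg: "2 \<le> card {u \<in> T. E v u}" if "v \<in> T" for v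
    using no_leaf that by (auto simp: not_le)
  have "\<exists>p. is_path T E p \<and> length p = Suc k" for k
  proof (induction k)
    case 0
    from ne obtain v where "v \<in> T" by auto
    then have "is_path T E [v]" by (simp add: is_path_def)
    then show ?case by force
  next
    case (Suc k)
    then obtain p where p: "is_path T E p" "length p = Suc k" by auto
    then have "hd p \<in> T" by (auto simp: is_path_def)
    then obtain u where "is_path T E (u # p)"
      using is_path_extend_or_cycle[OF sym irr p(1) deg] acyclic by metis
    then show ?case using p(2) by (metis length_Cons)
  qed
  then obtain p where p: "is_path T E p" "length p = Suc (card T)" by blast
  then have "card (set p) = Suc (card T)" by (simp add: is_path_def distinct_card)
  moreover have "card (set p) \<le> card T"
    using p fin by (intro card_mono) (auto simp: is_path_def)
  ultimately show False by simp
qed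

lemma card_adj_pairs_remove_vertex:
  assumes sym: "\<forall>x y. E x y \<longrightarrow> E y x" and fin: "finite T"
  shows "card (adj_pairs T E) \<le> card (adj_pairs (T - {v}) E) + 2 * card {u \<in> T. E v u}"
proof -
  let ?N = "{u \<in> T. E v u}"
  have sub: "adj_pairs T E \<subseteq> adj_pairs (T - {v}) E \<union> ({v} \<times> ?N) \<union> (?N \<times> {v})"
    using sym unfolding adj_pairs_def by auto
  have "card (adj_pairs T E)
      \<le> card (adj_pairs (T - {v}) E \<union> ({v} \<times> ?N) \<union> (?N \<times> {v}))"
    by (rule card_mono[OF _ sub]) (simp add: fin finite_adj_pairs)
  also have "\<dots> \<le> card (adj_pairs (T - {v}) E \<union> ({v} \<times> ?N)) + card (?N \<times> {v})"
    by (rule card_Un_le)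
  also have "\<dots> \<le> card (adj_pairs (T - {v}) E) + card ({v} \<times> ?N) + card (?N \<times> {v})"
    using card_Un_le by (rule add_right_mono)
  finally have "card (adj_pairs T E)
      \<le> card (adj_pairs (T - {v}) E) + card ({v} \<times> ?N) + card (?N \<times> {v})" .
  moreover have "card ({v} \<times> ?N) = card ?N" "card (?N \<times> {v}) = card ?N"
    by (simp_all add: card_cartesian_product)
  ultimately show ?thesis by linarith
qed

text \<open>
  \<open>adj_pairs\<close> counts every edge twice, so this says a forest on \<open>k\<close> vertices has at most
  \<open>k - 1\<close> edges.
\<close>

lemma acyclic_card_adj_pairs:
  assumes sym: "\<forall>x y. E x y \<longrightarrow> E y x" and irr: "\<forall>x. \<not> E x x"
  shows "finite T \<Longrightarrow> T \<noteq> {} \<Longrightarrow> \<not> (\<exists>cs. is_cycle T E cs) \<Longrightarrow>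
    card (adj_pairs T E) + 2 \<le> 2 * card T"
proof (induction "card T" arbitrary: T rule: less_induct)
  case less
  obtain v where v: "v \<in> T" "card {u \<in> T. E v u} \<le> 1"
    using acyclic_has_vertex_of_degree_le_1[OF less.prems(1,2) sym irr less.prems(3)] by blast
  show ?case
  proof (cases "T = {v}")
    case True
    then have "adj_pairs T E = {}" using irr by (auto simp: adj_pairs_def)
    then show ?thesis using True by simp
  next
    case False
    have "card (T - {v}) < card T" using less.prems(1) v(1) by (rule card_Diff1_less)
    moreover have "\<not> (\<exists>cs. is_cycle (T - {v}) E cs)"
      using less.prems(3) is_cycle_mono[of "T - {v}" E _ T] by blast
    ultimately have "card (adj_pairs (T - {v}) E) + 2 \<le> 2 * card (T - {v})"
      using less.hyps less.prems(1) False v(1) by blast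
    moreover have "card (T - {v}) + 1 = card T"
      using card.remove[OF less.prems(1) v(1)] by simp
    ultimately show ?thesis
      using card_adj_pairs_remove_vertex[OF sym less.prems(1), of v] v(2) by linarith
  qed
qed

text \<open>
  For an independent set \<open>A \<subseteq> S\<close>, the pairs starting in \<open>A\<close> and their reversals
  are disjoint parts of \<open>adj_pairs S E\<close>.
\<close>

lemma independent_sum_degree_le:
  assumes sym: "\<forall>x y. E x y \<longrightarrow> E y x" and fin: "finite S" and AS: "A \<subseteq> S"
    and indep: "\<forall>x \<in> A. \<forall>y \<in> A. \<not> E x y"
  shows "2 * (\<Sum>x \<in> A. card {u \<in> S. E x u}) \<le> card (adj_pairs S E)"
proof -
  let ?P = "Sigma A (\<lambda>x. {u \<in> S. E x u})"
  let ?Q = "prod.swap ` ?P"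
  have finP: "finite ?P" using fin AS by (auto intro: finite_subset)
  have "card ?P = (\<Sum>x \<in> A. card {u \<in> S. E x u})"
    using fin AS by (intro card_SigmaI) (auto intro: finite_subset)
  moreover have "card ?Q = card ?P" by (simp add: card_image)
  moreover have "?P \<inter> ?Q = {}" using indep by fastforce
  then have "card (?P \<union> ?Q) = card ?P + card ?Q"
    using finP by (simp add: card_Un_disjoint)
  moreover have "?P \<union> ?Q \<subseteq> adj_pairs S E" using AS sym by (auto simp: adj_pairs_def)
  then have "card (?P \<union> ?Q) \<le> card (adj_pairs S E)"
    using fin by (simp add: card_mono finite_adj_pairs)
  ultimately show ?thesis by linarith
qed

lemma degree_le_inside_plus_outside:
  assumes "finite S" "finite W" and nbrs: "{u \<in> V. E x u} \<subseteq> W"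
  shows "degree V E x \<le> card {u \<in> S. E x u} + card (W - S)"
proof -
  have "degree V E x \<le> card ({u \<in> S. E x u} \<union> (W - S))"
    unfolding degree_def using assms by (intro card_mono) auto
  also have "\<dots> \<le> card {u \<in> S. E x u} + card (W - S)" by (rule card_Un_le)
  finally show ?thesis .
qed

lemma min_degree_le_degree: "finite V \<Longrightarrow> v \<in> V \<Longrightarrow> min_degree V E \<le> degree V E v"
  unfolding min_degree_def by (intro Min_le) auto

lemma balanced_bipartite_swap:
  "balanced_bipartite V1 V2 E n \<Longrightarrow> balanced_bipartite V2 V1 E n"
  unfolding balanced_bipartite_def by (auto simp: Un_commute)

lemma balanced_bipartite_card_split:
  assumes bb: "balanced_bipartite V1 V2 E n" and SV: "S \<subseteq> V1 \<union> V2"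
  shows "card (S \<inter> V1) + card (S \<inter> V2) = card S" "card (S \<inter> V1) \<le> n" "card (S \<inter> V2) \<le> n"
proof -
  have fin: "finite V1" "finite V2" and disj: "V1 \<inter> V2 = {}" and card: "card V1 = n" "card V2 = n"
    using bb unfolding balanced_bipartite_def simple_graph_def by auto
  have "S = (S \<inter> V1) \<union> (S \<inter> V2)" "(S \<inter> V1) \<inter> (S \<inter> V2) = {}"
    using SV disj by blast+
  then show "card (S \<inter> V1) + card (S \<inter> V2) = card S"
    using fin card_Un_disjoint[of "S \<inter> V1" "S \<inter> V2"] by simp
  show "card (S \<inter> V1) \<le> n" "card (S \<inter> V2) \<le> n"
    using fin card card_mono by (metis inf_le2)+
qed

lemma induced_forest_part_bound:
  assumes bb: "balanced_bipartite V1 V2 E n" and SV: "S \<subseteq> V1 \<union> V2"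
    and forest: "induced_forest (V1 \<union> V2) E S" and ne: "S \<noteq> {}"
  shows "card (S \<inter> V1) * (min_degree (V1 \<union> V2) E + card (S \<inter> V2) - n) + 1 \<le> card S"
proof -
  have sym: "\<forall>x y. E x y \<longrightarrow> E y x" and irr: "\<forall>x. \<not> E x x"
    and fin: "finite V1" "finite V2" and disj: "V1 \<inter> V2 = {}" and cV2: "card V2 = n"
    and bip: "\<forall>x \<in> V1 \<union> V2. \<forall>y \<in> V1 \<union> V2. E x y \<longrightarrow> x \<in> V1 \<and> y \<in> V2 \<or> x \<in> V2 \<and> y \<in> V1"
    using bb unfolding balanced_bipartite_def simple_graph_def by auto
  have finS: "finite S" using SV fin finite_subset by blast
  let ?deg = "\<lambda>x. card {u \<in> S. E x u}"
  have inside_deg: "min_degree (V1 \<union> V2) E + card (S \<inter> V2) - n \<le> ?deg x"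
    if x: "x \<in> S \<inter> V1" for x
  proof -
    have "{u \<in> V1 \<union> V2. E x u} \<subseteq> V2" using bip x SV disj by auto
    then have "degree (V1 \<union> V2) E x \<le> ?deg x + card (V2 - S)"
      using finS fin by (intro degree_le_inside_plus_outside)
    moreover have "card (V2 - S) + card (S \<inter> V2) = n"
      using cV2 fin card_Diff_subset_Int[of V2 S] card_mono[of V2 "S \<inter> V2"]
      by (simp add: Int_commute)
    moreover have "min_degree (V1 \<union> V2) E \<le> degree (V1 \<union> V2) E x"
      using x SV fin by (intro min_degree_le_degree) auto
    ultimately show ?thesis by linarith
  qed
  have "card (S \<inter> V1) * (min_degree (V1 \<union> V2) E + card (S \<inter> V2) - n)
      \<le> (\<Sum>x \<in> S \<inter> V1. ?deg x)"
    using sum_bounded_below[where A = "S \<inter> V1" and f = ?deg, OF inside_deg] by simp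
  moreover have "2 * (\<Sum>x \<in> S \<inter> V1. ?deg x) \<le> card (adj_pairs S E)"
    using bip SV disj by (intro independent_sum_degree_le[OF sym finS]) blast+
  moreover have "card (adj_pairs S E) + 2 \<le> 2 * card S"
    using forest acyclic_card_adj_pairs[OF sym irr finS ne] unfolding induced_forest_def by blast
  ultimately show ?thesis by linarith
qed

lemma smaller_part_cases:
  fixes a b d n :: nat
  assumes ab: "a + b = n + 1" and d: "n + 2 \<le> 2 * d" and le: "a \<le> b" and a3: "3 \<le> a"
    and bound: "a * (d + b - n) \<le> n"
  shows "2 * a = n"
proof -
  define c where "c = d + b - n"
  have c: "n + 4 \<le> 2 * c + 2 * a" using ab d unfolding c_def by linarith
  have ac: "a * c \<le> n" using bound unfolding c_def .
  have "2 * a \<ge> n"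
  proof (rule ccontr)
    assume "\<not> 2 * a \<ge> n"
    then have "1 \<le> int a - 2" "1 \<le> int n - 2 * int a" using a3 by linarith+
    then have "1 \<le> (int a - 2) * (int n - 2 * int a)"
      using mult_mono[of 1 "int a - 2" 1 "int n - 2 * int a"] by simp
    moreover have "int a * (int n + 4 - 2 * int a) \<le> int a * (2 * int c)"
      using c by (intro mult_left_mono) auto
    ultimately have "int n < int a * int c" by (simp add: algebra_simps)
    then show False using ac by (simp flip: of_nat_mult)
  qed
  moreover have "2 * a \<noteq> n + 1"
  proof
    assume odd: "2 * a = n + 1"
    then have "2 \<le> c" using c by linarith
    then have "2 * a \<le> a * c" by simp
    then show False using ac odd by linarith
  qed
  ultimately show ?thesis using ab le by linarith
qed

theorem theorem2p3:
  fixes V1 V2 :: "'a set" and E :: "'a \<Rightarrow> 'a \<Rightarrow> bool" and n :: nat and S :: "'a set"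
  assumes "n > 0"
    and "balanced_bipartite V1 V2 E n"
    and "real (min_degree (V1 \<union> V2) E) \<ge> real n / 2 + 1"
    and "S \<subseteq> V1 \<union> V2"
    and "card S = n + 1"
    and "induced_forest (V1 \<union> V2) E S"
  shows "real (min (card (S \<inter> V1)) (card (S \<inter> V2))) \<in> {1, 2, real n / 2}"
proof -
  define d where "d = min_degree (V1 \<union> V2) E"
  define a where "a = card (S \<inter> V1)"
  define b where "b = card (S \<inter> V2)"
  have S_ne: "S \<noteq> {}" using assms(5) by auto
  have d: "n + 2 \<le> 2 * d" using assms(3) unfolding d_def by linarith
  have ab: "a + b = n + 1" and parts: "a \<le> n" "b \<le> n"
    using balanced_bipartite_card_split[OF assms(2,4)] assms(5) unfolding a_def b_def by auto
  have bound_a: "a * (d + b - n) \<le> n"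
    using induced_forest_part_bound[OF assms(2,4,6) S_ne] assms(5)
    unfolding a_def b_def d_def by linarith
  have bound_b: "b * (d + a - n) \<le> n"
    using induced_forest_part_bound[OF balanced_bipartite_swap[OF assms(2)], of S]
      assms(4-6) S_ne
    unfolding a_def b_def d_def by (simp add: Un_commute)
  have "2 * min a b = n" if "3 \<le> min a b"
    using that smaller_part_cases[OF ab d _ _ bound_a] smaller_part_cases[of b a n d] ab d bound_b
    by (cases "a \<le> b") (auto simp: min_def)
  moreover have "1 \<le> min a b" using ab parts by simp
  ultimately have "min a b = 1 \<or> min a b = 2 \<or> 2 * min a b = n" by linarith
  then show ?thesis unfolding a_def b_def by (auto simp del: of_nat_min)
qed

end
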